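(* Let $n\ge 2$. Then \[ R_n=\inf_{\mathbb{P}\in\mathcal{C}_n}\ \sup_{x,y\in\mathbb{R}_{++}}\phi^{\mathbb{P}}(x,y). \]
   Context: Scheduling on two machines with $n$ tasks. A processing-time matrix is $T=(T_{ij})\in\mathbb{R}_{++}^{2\times n}$ ($T_{ij}$ is the time of task $j$ on machine $i$). An allocation is $X\in\{0,1\}^{2\times n}$ with $X_{1j}+X_{2j}=1$ for every $j$ (task $j$ is processed on machine $i$ iff $X_{ij}=1$). The makespan is $M(X,T)=\max_{i\in\{1,2\}}\sum_{j=1}^n X_{ij}T_{ij}$, and $M^*(T)=\min_X M(X,T)$ over all allocations. Let $\mathcal{P}_n$ be the set of Borel probability measures on $\mathbb{R}^n$ with support contained in $\mathbb{R}_{++}^n$. For $\mathbb{P}\in\mathcal{P}_n$, the randomized algorithm $\mathcal{A}^{\mathbb{P}}$ draws $\mathbf{z}=(z_1,\dots,z_n)\sim\mathbb{P}$ and, for each $j$, assigns task $j$ to machine 1 if $T_{1j}/T_{2j}<z_j$ and to machine 2 otherwise; let $X^{\mathbb{P},T}$ be the resulting random allocation. Define $M(\mathbb{P},T)=\mathbf{E}_{\mathbf{z}\sim\mathbb{P}}\,M(X^{\mathbb{P},T},T)$, $R_n(\mathbb{P},T)=M(\mathbb{P},T)/M^*(T)$, $R_n(\mathbb{P})=\sup_{T\in\mathbb{R}_{++}^{2\times n}}R_n(\mathbb{P},T)\in[1,\infty]$, and $R_n=\inf_{\mathbb{P}\in\mathcal{P}_n}R_n(\mathbb{P})$. Let $\mathcal{C}_n\subseteq\mathcal{P}_n$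 be the set of measures invariant under permutations of coordinates: for every permutation $\pi$ of $[n]$, if $\mathbf{z}\sim\mathbb{P}$ then $(z_{\pi(1)},\dots,z_{\pi(n)})\sim\mathbb{P}$. For $\mathbb{P}\in\mathcal{C}_n$ let $F_{\mathbb{P}}(x)=\mathbf{P}_{\mathbf{z}\sim\mathbb{P}}[z_1\le x]$ (the common univariate marginal CDF) and $H_{\mathbb{P}}(x,y)=\mathbf{P}_{\mathbf{z}\sim\mathbb{P}}[z_1\le x,\,z_2\le y]$ (the common bivariate marginal CDF), and define for $x,y>0$ \[ \phi^{\mathbb{P}}(x,y)=1+y-\min\{1,\,1-\tfrac1x+y\}F_{\mathbb{P}}(x)-yF_{\mathbb{P}}(y)+\min\{1+\tfrac1x,\,1+y\}H_{\mathbb{P}}(x,y). \] *)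

theory Defs
  imports "HOL-Probability.Probability"
begin

text \<open>Points of R^n are vectors real^'n, with 'n a finite index type (n = CARD('n)).\<close>

definition orthant :: "(real^'n) set" where
  "orthant = {z. \<forall>i. 0 < z $ i}"

definition msupp :: "(real^'n) measure \<Rightarrow> (real^'n) set" where
  "msupp M = {x. \<forall>e>0. emeasure M (ball x e) > 0}"

definition Pn :: "(real^'n) measure set" where
  "Pn = {M. prob_space M \<and> sets M = sets borel \<and> msupp M \<subseteq> orthant}"

definition Cn :: "(real^'n) measure set" where
  "Cn = {M \<in> Pn. \<forall>\<pi>. \<pi> permutes (UNIV :: 'n set) \<longrightarrow>
          distr M borel (\<lambda>z. \<chi> i. z $ \<pi> i) = M}"

text \<open>An allocation is encoded as X :: 'n \<Rightarrow> bool: X j iff task j is on machine 1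
  (X_{1j} = 1), otherwise on machine 2. Processing times: t1 = row 1, t2 = row 2 of T.\<close>
definition makespan :: "('n::finite \<Rightarrow> bool) \<Rightarrow> real^'n \<Rightarrow> real^'n \<Rightarrow> real" where
  "makespan X t1 t2 = max (\<Sum>j\<in>{j. X j}. t1 $ j) (\<Sum>j\<in>{j. \<not> X j}. t2 $ j)"

definition opt_makespan :: "real^'n::finite \<Rightarrow> real^'n \<Rightarrow> real" where
  "opt_makespan t1 t2 = Min (range (\<lambda>X. makespan X t1 t2))"

definition alg_alloc :: "real^'n \<Rightarrow> real^'n \<Rightarrow> real^'n \<Rightarrow> ('n \<Rightarrow> bool)" where
  "alg_alloc t1 t2 z = (\<lambda>j. t1 $ j / t2 $ j < z $ j)"

definition alg_makespan :: "(real^'n::finite) measure \<Rightarrow> real^'n \<Rightarrow> real^'n \<Rightarrow> real" where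
  "alg_makespan M t1 t2 = (\<integral>z. makespan (alg_alloc t1 t2 z) t1 t2 \<partial>M)"

definition pos_inst :: "((real^'n) \<times> (real^'n)) set" where
  "pos_inst = {(t1, t2). (\<forall>j. 0 < t1 $ j) \<and> (\<forall>j. 0 < t2 $ j)}"

definition worst_ratio :: "(real^'n::finite) measure \<Rightarrow> ereal" where
  "worst_ratio M = (SUP p \<in> pos_inst. ereal (alg_makespan M (fst p) (snd p) / opt_makespan (fst p) (snd p)))"

definition Rn :: "'n::finite itself \<Rightarrow> ereal" where
  "Rn _ = (INF M \<in> (Pn :: (real^'n) measure set). worst_ratio M)"

text \<open>Two fixed distinct coordinates (playing the roles of coordinates 1 and 2).\<close>
definition idx1 :: 'n where "idx1 = (SOME i. True)"
definition idx2 :: 'n where "idx2 = (SOME j. j \<noteq> idx1)"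

definition Fm :: "(real^'n) measure \<Rightarrow> real \<Rightarrow> real" where
  "Fm M x = measure M {z. z $ idx1 \<le> x}"

definition Hm :: "(real^'n) measure \<Rightarrow> real \<Rightarrow> real \<Rightarrow> real" where
  "Hm M x y = measure M {z. z $ idx1 \<le> x \<and> z $ idx2 \<le> y}"

definition phi :: "(real^'n) measure \<Rightarrow> real \<Rightarrow> real \<Rightarrow> real" where
  "phi M x y = 1 + y - min 1 (1 - 1/x + y) * Fm M x - y * Fm M y
                 + min (1 + 1/x) (1 + y) * Hm M x y"

end

theory Submission
  imports Defs
begin

(* The two sides are linked through two-task instances. Padding a two-task instance with
  ratios x, y on tasks j, k by negligible tasks shows that the worst ratio of any measure
  is at least phi_jk(x, y), the function phi computed from the coordinates j, k instead
  of 1, 2. Conversely, on an arbitrary instance the makespan of the threshold rule is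
  dominated pointwise by the optimum times a convex combination of two-task costs over
  pairs (j, k), j a task of the first and k a task of the second machine in an optimal
  allocation; integrating bounds the ratio by some phi_jk. For a permutation-invariant
  measure all phi_jk coincide with phi, so its worst ratio is sup phi; and averaging any
  measure over coordinate permutations yields an invariant measure whose phi is an
  average of the phi_jk of the original one, hence at most its worst ratio. *)

lemma exists_ge_convex_combination:
  fixes w a :: "'a \<Rightarrow> real"
  assumes "finite S" "\<And>x. x \<in> S \<Longrightarrow> 0 \<le> w x" "sum w S = 1"
  obtains x where "x \<in> S" "w x \<noteq> 0" "(\<Sum>y\<in>S. w y * a y) \<le> a x"
proof -
  define T where "T = {x \<in> S. w x \<noteq> 0}"
  have "T \<noteq> {}"
  proof
    assume "T = {}"
    then have "sum w S = 0" by (intro sum.neutral) (auto simp: T_def)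
    then show False using assms(3) by simp
  qed
  then have T: "finite T" "T \<noteq> {}" using assms(1) by (auto simp: T_def)
  have "Max (a ` T) \<in> a ` T"
    using T by (intro Max_in) auto
  then obtain x where x: "x \<in> T" "a x = Max (a ` T)"
    by auto
  have "(\<Sum>y\<in>T. w y) = sum w S"
    unfolding T_def by (rule sum.mono_neutral_left) (use assms(1) in auto)
  then have wT: "(\<Sum>y\<in>T. w y) = 1"
    using assms(3) by simp
  have "(\<Sum>y\<in>S. w y * a y) = (\<Sum>y\<in>T. w y * a y)"
    unfolding T_def by (rule sum.mono_neutral_right) (use assms(1) in auto)
  also have "\<dots> \<le> (\<Sum>y\<in>T. w y * a x)"
    using T x assms(2) by (intro sum_mono mult_left_mono) (auto simp: T_def)
  also have "\<dots> = a x"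
    using wT by (simp add: sum_distrib_right[symmetric])
  finally show ?thesis
    using x that by (auto simp: T_def)
qed

definition assigned :: "('n \<Rightarrow> bool) \<Rightarrow> real^'n \<Rightarrow> 'n \<Rightarrow> real" where
  "assigned X t i = (if X i then t $ i else 0)"

lemma makespan_eq_sum_assigned:
  "makespan X t1 t2 = max (sum (assigned X t1) UNIV) (sum (assigned (\<lambda>i. \<not> X i) t2) UNIV)"
  unfolding makespan_def assigned_def by (simp add: sum.If_cases Collect_neg_eq)

lemma borel_measurable_makespan_alg_alloc[measurable]:
  "(\<lambda>z. makespan (alg_alloc t1 t2 z) t1 t2) \<in> borel_measurable borel"
  unfolding makespan_eq_sum_assigned assigned_def alg_alloc_def by measurable

lemma integrable_makespan_alg_alloc:
  assumes "prob_space M" "sets M = sets borel"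
  shows "integrable M (\<lambda>z. makespan (alg_alloc t1 t2 z) t1 t2)"
proof -
  interpret prob_space M by fact
  define B where "B = Max (range (\<lambda>X. \<bar>makespan X t1 t2\<bar>))"
  have "norm (makespan X t1 t2) \<le> B" for X
    unfolding B_def by (intro Max_ge) auto
  then show ?thesis
    by (intro integrable_const_bound[where B = B]) (use assms(2) in auto)
qed

lemma opt_makespan_le: "opt_makespan t1 t2 \<le> makespan X t1 t2"
  unfolding opt_makespan_def by (rule Min_le) auto

lemma opt_makespan_attained: obtains X where "opt_makespan t1 t2 = makespan X t1 t2"
proof -
  have "opt_makespan t1 t2 \<in> range (\<lambda>X. makespan X t1 t2)"
    unfolding opt_makespan_def by (rule Min_in) auto
  then show ?thesis using that by auto
qed

lemma makespan_pos:
  assumes "\<forall>j. 0 < t1 $ j" "\<forall>j. 0 < t2 $ j"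
  shows "0 < makespan X t1 t2"
proof (cases "\<exists>j. X j")
  case True
  then obtain j where "X j" by auto
  then have "0 < (\<Sum>j\<in>{j. X j}. t1 $ j)" using assms by (intro sum_pos) auto
  then show ?thesis unfolding makespan_def by auto
next
  case False
  then have "0 < (\<Sum>j\<in>{j. \<not> X j}. t2 $ j)" using assms by (simp add: sum_pos)
  then show ?thesis unfolding makespan_def by auto
qed

lemma opt_makespan_pos:
  assumes "\<forall>j. 0 < t1 $ j" "\<forall>j. 0 < t2 $ j"
  shows "0 < opt_makespan t1 t2"
  using opt_makespan_attained makespan_pos[OF assms] by metis

subsection \<open>Two-task instances\<close>

(* The makespan of the threshold rule with thresholds a, b on the instance with the two
  tasks (1, 1/x) and (y, 1), whose ratios are x and y. *)
definition two_task_cost :: "real \<Rightarrow> real \<Rightarrow> real \<Rightarrow> real \<Rightarrow> real" where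
  "two_task_cost x y a b =
     max ((if x < a then 1 else 0) + (if y < b then y else 0))
         ((if x < a then 0 else 1/x) + (if y < b then 0 else 1))"

definition phi_on :: "(real^'n) measure \<Rightarrow> 'n \<Rightarrow> 'n \<Rightarrow> real \<Rightarrow> real \<Rightarrow> real" where
  "phi_on M j k x y = 1 + y - min 1 (1 - 1/x + y) * measure M {z. z$j \<le> x}
     - y * measure M {z. z$k \<le> y} + min (1 + 1/x) (1 + y) * measure M {z. z$j \<le> x \<and> z$k \<le> y}"

lemma borel_measurable_two_task_cost[measurable]:
  "(\<lambda>z::real^'n. two_task_cost x y (z$j) (z$k)) \<in> borel_measurable borel"
  unfolding two_task_cost_def by measurable

lemma integrable_two_task_cost:
  assumes "prob_space M" "sets M = sets borel" "0 < x" "0 < y"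
  shows "integrable M (\<lambda>z::real^'n. two_task_cost x y (z$j) (z$k))"
proof -
  interpret prob_space M by fact
  have "\<bar>two_task_cost x y a b\<bar> \<le> 2 + y + 1/x" for a b
    using assms(3,4) unfolding two_task_cost_def by (auto simp: max_def)
  then show ?thesis
    by (intro integrable_const_bound[where B = "2 + y + 1/x"]) (use assms(2) in auto)
qed

lemma integral_two_task_cost:
  fixes M :: "(real^'n) measure"
  assumes "prob_space M" "sets M = sets borel" "0 < x" "0 < y"
  shows "(\<integral>z. two_task_cost x y (z$j) (z$k) \<partial>M) = phi_on M j k x y"
proof -
  interpret prob_space M by fact
  have "two_task_cost x y (z$j) (z$k) =
      1 + y - min 1 (1 - 1/x + y) * indicator {z. z$j \<le> x} z - y * indicator {z. z$k \<le> y} z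
      + min (1 + 1/x) (1 + y) * indicator {z. z$j \<le> x \<and> z$k \<le> y} z" for z :: "real^'n"
    using assms(3,4) by (auto simp: two_task_cost_def indicator_def min_def max_def field_simps)
  moreover have "{z::real^'n. z$j \<le> x} \<in> sets M" "{z::real^'n. z$k \<le> y} \<in> sets M"
    "{z::real^'n. z$j \<le> x \<and> z$k \<le> y} \<in> sets M"
    using assms(2) by auto
  ultimately show ?thesis
    unfolding phi_on_def by (simp add: emeasure_eq_measure prob_space)
qed

lemma phi_on_nonneg:
  fixes M :: "(real^'n) measure"
  assumes "prob_space M" "sets M = sets borel" "0 < x" "0 < y"
  shows "0 \<le> phi_on M j k x y"
proof -
  have "0 \<le> two_task_cost x y a b" for a b
    using assms(3,4) unfolding two_task_cost_def by (auto simp: max_def)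
  then show ?thesis
    unfolding integral_two_task_cost[OF assms, symmetric] by (simp add: integral_nonneg)
qed

lemma two_task_cost_le_makespan:
  assumes "j \<noteq> k" "\<forall>i. 0 \<le> t1 $ i" "\<forall>i. 0 \<le> t2 $ i"
    and "t1 $ j = 1" "t2 $ j = 1/x" "t1 $ k = y" "t2 $ k = 1"
  shows "two_task_cost x y (z$j) (z$k) \<le> makespan (alg_alloc t1 t2 z) t1 t2"
proof -
  let ?X = "alg_alloc t1 t2 z"
  have X: "?X j = (x < z$j)" "?X k = (y < z$k)"
    using assms(4-7) by (simp_all add: alg_alloc_def)
  have "(\<Sum>i\<in>{j,k}. assigned ?X t1 i) = (if x < z$j then 1 else 0) + (if y < z$k then y else 0)"
    using assms(1,4,6) X by (simp add: assigned_def)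
  moreover have "(\<Sum>i\<in>{j,k}. assigned ?X t1 i) \<le> sum (assigned ?X t1) UNIV"
    by (rule sum_mono2) (use assms(2) in \<open>auto simp: assigned_def\<close>)
  moreover have "(\<Sum>i\<in>{j,k}. assigned (\<lambda>i. \<not> ?X i) t2 i) =
      (if x < z$j then 0 else 1/x) + (if y < z$k then 0 else 1)"
    using assms(1,5,7) X by (simp add: assigned_def)
  moreover have "(\<Sum>i\<in>{j,k}. assigned (\<lambda>i. \<not> ?X i) t2 i) \<le> sum (assigned (\<lambda>i. \<not> ?X i) t2) UNIV"
    by (rule sum_mono2) (use assms(3) in \<open>auto simp: assigned_def\<close>)
  ultimately show ?thesis
    unfolding makespan_eq_sum_assigned two_task_cost_def by (intro max.mono) auto
qed

definition padded :: "'n \<Rightarrow> 'n \<Rightarrow> real \<Rightarrow> real \<Rightarrow> real \<Rightarrow> real^'n" where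
  "padded j k a b d = (\<chi> i. if i = j then a else if i = k then b else d)"

lemma phi_on_le_alg_makespan_padded:
  fixes P :: "(real^'n::finite) measure"
  assumes "prob_space P" "sets P = sets borel" "j \<noteq> k" "0 < x" "0 < y" "0 < d"
  shows "phi_on P j k x y \<le> alg_makespan P (padded j k 1 y d) (padded j k (1/x) 1 d)"
  unfolding alg_makespan_def integral_two_task_cost[OF assms(1,2,4,5), of j k, symmetric]
proof (rule integral_mono)
  show "integrable P (\<lambda>z. two_task_cost x y (z$j) (z$k))"
    using integrable_two_task_cost[OF assms(1,2,4,5)] .
  show "integrable P (\<lambda>z. makespan (alg_alloc (padded j k 1 y d) (padded j k (1/x) 1 d) z)
      (padded j k 1 y d) (padded j k (1/x) 1 d))"
    using integrable_makespan_alg_alloc[OF assms(1,2)] .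
qed (use assms in \<open>intro two_task_cost_le_makespan, auto simp: padded_def\<close>)

lemma opt_makespan_padded_le:
  fixes j k :: "'n::finite" and d :: real
  assumes "j \<noteq> k" "0 \<le> d"
  shows "opt_makespan (padded j k 1 y d) (padded j k (1/x) 1 d) \<le> 1 + CARD('n) * d"
proof -
  let ?t1 = "padded j k 1 y d" and ?t2 = "padded j k (1/x) 1 d :: real^'n"
  have "(\<Sum>i\<in>{i. i \<noteq> k}. ?t1 $ i) \<le> (\<Sum>i\<in>{i. i \<noteq> k}. (if i = j then 1 else 0) + d)"
    by (rule sum_mono) (use assms in \<open>auto simp: padded_def\<close>)
  also have "\<dots> \<le> (\<Sum>i\<in>UNIV. (if i = j then 1 else 0) + d)"
    by (rule sum_mono2) (use assms in auto)
  also have "\<dots> = 1 + CARD('n) * d"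
    by (simp add: sum.distrib)
  finally have "(\<Sum>i\<in>{i. i \<noteq> k}. ?t1 $ i) \<le> 1 + CARD('n) * d" .
  moreover have "{i. \<not> i \<noteq> k} = {k}" by auto
  then have "(\<Sum>i\<in>{i. \<not> i \<noteq> k}. ?t2 $ i) = 1"
    using assms(1) by (simp add: padded_def)
  ultimately have "makespan (\<lambda>i. i \<noteq> k) ?t1 ?t2 \<le> 1 + CARD('n) * d"
    unfolding makespan_def using assms(2) by simp
  then show ?thesis
    using opt_makespan_le order_trans by blast
qed

(* The padding tasks of time d make the optimum exceed 1 by at most n d; letting d tend
  to 0 removes their effect. *)
lemma phi_on_le_worst_ratio:
  fixes P :: "(real^'n::finite) measure"
  assumes "prob_space P" "sets P = sets borel" "j \<noteq> k" "0 < x" "0 < y"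
  shows "ereal (phi_on P j k x y) \<le> worst_ratio P"
proof -
  define c where "c = real CARD('n)"
  have bound: "ereal (phi_on P j k x y / (1 + c * d)) \<le> worst_ratio P" if "0 < d" for d
  proof -
    let ?t1 = "padded j k 1 y d" and ?t2 = "padded j k (1/x) 1 d :: real^'n"
    have pos: "\<forall>i. 0 < ?t1 $ i" "\<forall>i. 0 < ?t2 $ i"
      using assms that by (auto simp: padded_def)
    have opt: "0 < opt_makespan ?t1 ?t2" "opt_makespan ?t1 ?t2 \<le> 1 + c * d"
      using opt_makespan_pos[OF pos] opt_makespan_padded_le[OF assms(3)] that
      by (auto simp: c_def)
    have "phi_on P j k x y / (1 + c * d) \<le> phi_on P j k x y / opt_makespan ?t1 ?t2"
      using opt phi_on_nonneg[OF assms(1,2,4,5)] by (intro divide_left_mono) auto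
    also have "\<dots> \<le> alg_makespan P ?t1 ?t2 / opt_makespan ?t1 ?t2"
      using phi_on_le_alg_makespan_padded[OF assms that] opt by (intro divide_right_mono) auto
    also have "ereal \<dots> \<le> worst_ratio P"
      unfolding worst_ratio_def by (rule SUP_upper2[where i = "(?t1, ?t2)"])
        (use pos in \<open>auto simp: pos_inst_def\<close>)
    finally show ?thesis by simp
  qed
  have "((\<lambda>d. phi_on P j k x y / (1 + c * d)) \<longlongrightarrow> phi_on P j k x y / (1 + c * 0)) (at_right 0)"
    by (intro tendsto_intros) auto
  then have "((\<lambda>d. ereal (phi_on P j k x y / (1 + c * d))) \<longlongrightarrow> ereal (phi_on P j k x y)) (at_right 0)"
    by (simp add: lim_ereal)
  then show ?thesis
    by (rule tendsto_upperbound) (auto simp: eventually_at_right_field intro!: exI[of _ 1] bound)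
qed

subsection \<open>Upper bound by pairs of tasks\<close>

lemma exists_product_pair_weights:
  fixes p q :: "'n::finite \<Rightarrow> real"
  assumes "\<And>i. 0 \<le> p i" "\<And>i. 0 \<le> q i" "\<And>i. p i * q i = 0"
    and P: "0 < sum p UNIV" and Q: "0 < sum q UNIV"
  obtains w :: "'n \<Rightarrow> 'n \<Rightarrow> real"
  where "\<And>j k. 0 \<le> w j k" "\<And>j k. w j k \<noteq> 0 \<Longrightarrow> j \<noteq> k" "(\<Sum>j\<in>UNIV. \<Sum>k\<in>UNIV. w j k) = 1"
    "\<And>j. sum p UNIV * (\<Sum>k\<in>UNIV. w j k) = p j" "\<And>k. sum q UNIV * (\<Sum>j\<in>UNIV. w j k) = q k"
proof
  let ?w = "\<lambda>j k. p j * q k / (sum p UNIV * sum q UNIV)"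
  show "0 \<le> ?w j k" "?w j k \<noteq> 0 \<Longrightarrow> j \<noteq> k" for j k
    using assms(1-3)[of j] assms(2)[of k] P Q by auto
  have "(\<Sum>j\<in>UNIV. \<Sum>k\<in>UNIV. ?w j k) = (\<Sum>j\<in>UNIV. \<Sum>k\<in>UNIV. p j * q k) / (sum p UNIV * sum q UNIV)"
    by (simp add: sum_divide_distrib)
  then show "(\<Sum>j\<in>UNIV. \<Sum>k\<in>UNIV. ?w j k) = 1"
    using P Q by (simp add: sum_product[symmetric])
  show "sum p UNIV * (\<Sum>k\<in>UNIV. ?w j k) = p j" for j
    using P Q unfolding sum_divide_distrib[symmetric] sum_distrib_left[symmetric] by simp
  show "sum q UNIV * (\<Sum>j\<in>UNIV. ?w j k) = q k" for k
    using P Q unfolding sum_divide_distrib[symmetric] sum_distrib_right[symmetric] by simp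
qed

lemma exists_one_sided_pair_weights:
  fixes p :: "'n::finite \<Rightarrow> real"
  assumes "a \<noteq> (b::'n)" "\<And>i. 0 \<le> p i" and P: "0 < sum p UNIV"
  obtains w :: "'n \<Rightarrow> 'n \<Rightarrow> real"
  where "\<And>j k. 0 \<le> w j k" "\<And>j k. w j k \<noteq> 0 \<Longrightarrow> j \<noteq> k" "(\<Sum>j\<in>UNIV. \<Sum>k\<in>UNIV. w j k) = 1"
    "\<And>j. sum p UNIV * (\<Sum>k\<in>UNIV. w j k) = p j"
proof
  define \<sigma> where "\<sigma> j = (if j = a then b else a)" for j
  let ?w = "\<lambda>j k. if k = \<sigma> j then p j / sum p UNIV else 0"
  have "\<sigma> j \<noteq> j" for j
    using assms(1) by (auto simp: \<sigma>_def)
  then show "?w j k \<noteq> 0 \<Longrightarrow> j \<noteq> k" for j k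
    by metis
  show "0 \<le> ?w j k" for j k
    using assms(2) P by simp
  show "(\<Sum>j\<in>UNIV. \<Sum>k\<in>UNIV. ?w j k) = 1"
    using P by (simp add: sum_divide_distrib[symmetric])
  show "sum p UNIV * (\<Sum>k\<in>UNIV. ?w j k) = p j" for j
    using P by simp
qed

lemma exists_pair_weights:
  fixes p q :: "'n::finite \<Rightarrow> real"
  assumes "a \<noteq> (b::'n)" "\<And>i. 0 \<le> p i" "\<And>i. 0 \<le> q i" "\<And>i. p i * q i = 0"
    and "0 < sum p UNIV + sum q UNIV"
  obtains w :: "'n \<Rightarrow> 'n \<Rightarrow> real"
  where "\<And>j k. 0 \<le> w j k" "\<And>j k. w j k \<noteq> 0 \<Longrightarrow> j \<noteq> k" "(\<Sum>j\<in>UNIV. \<Sum>k\<in>UNIV. w j k) = 1"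
    "\<And>j. sum p UNIV * (\<Sum>k\<in>UNIV. w j k) = p j" "\<And>k. sum q UNIV * (\<Sum>j\<in>UNIV. w j k) = q k"
proof -
  have "0 \<le> sum p UNIV" "0 \<le> sum q UNIV"
    using assms(2,3) by (auto intro: sum_nonneg)
  then consider "0 < sum p UNIV" "0 < sum q UNIV" | "sum q UNIV = 0" "0 < sum p UNIV"
    | "sum p UNIV = 0" "0 < sum q UNIV"
    using assms(5) by linarith
  then show ?thesis
  proof cases
    case 1
    show ?thesis
      by (rule exists_product_pair_weights[OF assms(2-4) 1]) (rule that)
  next
    case 2
    then have "q i = 0" for i
      using assms(3) sum_nonneg_eq_0_iff[of UNIV q] by auto
    obtain w where "\<And>j k. 0 \<le> w j k" "\<And>j k. w j k \<noteq> 0 \<Longrightarrow> j \<noteq> k"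
      "(\<Sum>j\<in>UNIV. \<Sum>k\<in>UNIV. w j k) = 1" "\<And>j. sum p UNIV * (\<Sum>k\<in>UNIV. w j k) = p j"
      by (rule exists_one_sided_pair_weights[OF assms(1,2) 2(2)]) (rule that)
    then show ?thesis
      using 2 \<open>\<And>i. q i = 0\<close> by (intro that[of w]) auto
  next
    case 3
    then have "p i = 0" for i
      using assms(2) sum_nonneg_eq_0_iff[of UNIV p] by auto
    obtain w where w: "\<And>j k. 0 \<le> w j k" "\<And>j k. w j k \<noteq> 0 \<Longrightarrow> j \<noteq> k"
      "(\<Sum>j\<in>UNIV. \<Sum>k\<in>UNIV. w j k) = 1" "\<And>j. sum q UNIV * (\<Sum>k\<in>UNIV. w j k) = q j"
      by (rule exists_one_sided_pair_weights[OF assms(1,3) 3(2)]) (rule that)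
    show ?thesis
    proof (rule that[of "\<lambda>j k. w k j"])
      show "(\<Sum>j\<in>UNIV. \<Sum>k\<in>UNIV. w k j) = 1"
        using w(3) by (subst sum.swap)
      show "sum p UNIV * (\<Sum>k\<in>UNIV. w k j) = p j" for j
        using 3 \<open>\<And>i. p i = 0\<close> by simp
    qed (use w in auto)
  qed
qed

lemma sum_le_pair_weighted:
  fixes w h :: "'n::finite \<Rightarrow> 'n \<Rightarrow> real"
  assumes w: "\<And>j k. 0 \<le> w j k" and m: "0 \<le> m" "sum p UNIV \<le> m" "sum q UNIV \<le> m"
    and wp: "\<And>j. sum p UNIV * (\<Sum>k\<in>UNIV. w j k) = p j"
    and wq: "\<And>k. sum q UNIV * (\<Sum>j\<in>UNIV. w j k) = q k"
    and fg: "\<And>i. 0 \<le> f i" "\<And>i. 0 \<le> g i" and h: "\<And>j k. f j + g k \<le> h j k"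
  shows "(\<Sum>i\<in>UNIV. p i * f i + q i * g i) \<le> m * (\<Sum>j\<in>UNIV. \<Sum>k\<in>UNIV. w j k * h j k)"
proof -
  let ?P = "sum p UNIV" and ?Q = "sum q UNIV"
  have "(\<Sum>j\<in>UNIV. \<Sum>k\<in>UNIV. w j k * (?P * f j)) = (\<Sum>j\<in>UNIV. (?P * (\<Sum>k\<in>UNIV. w j k)) * f j)"
    by (simp add: sum_distrib_left sum_distrib_right ac_simps)
  then have sum_pf: "(\<Sum>i\<in>UNIV. p i * f i) = (\<Sum>j\<in>UNIV. \<Sum>k\<in>UNIV. w j k * (?P * f j))"
    by (simp only: wp)
  have "(\<Sum>j\<in>UNIV. \<Sum>k\<in>UNIV. w j k * (?Q * g k)) = (\<Sum>k\<in>UNIV. \<Sum>j\<in>UNIV. w j k * (?Q * g k))"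
    by (rule sum.swap)
  also have "\<dots> = (\<Sum>k\<in>UNIV. (?Q * (\<Sum>j\<in>UNIV. w j k)) * g k)"
    by (simp add: sum_distrib_left sum_distrib_right ac_simps)
  finally have sum_qg: "(\<Sum>i\<in>UNIV. q i * g i) = (\<Sum>j\<in>UNIV. \<Sum>k\<in>UNIV. w j k * (?Q * g k))"
    by (simp only: wq)
  have "(\<Sum>i\<in>UNIV. p i * f i + q i * g i) = (\<Sum>j\<in>UNIV. \<Sum>k\<in>UNIV. w j k * (?P * f j + ?Q * g k))"
    unfolding sum.distrib sum_pf sum_qg by (simp add: distrib_left sum.distrib)
  also have "\<dots> \<le> (\<Sum>j\<in>UNIV. \<Sum>k\<in>UNIV. w j k * (m * h j k))"
  proof (intro sum_mono mult_left_mono w)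
    fix j k
    have "?P * f j + ?Q * g k \<le> m * f j + m * g k"
      using m fg by (intro add_mono mult_right_mono) auto
    also have "\<dots> \<le> m * h j k"
      using m h[of j k] by (simp add: distrib_left[symmetric] mult_left_mono)
    finally show "?P * f j + ?Q * g k \<le> m * h j k" .
  qed
  also have "\<dots> = m * (\<Sum>j\<in>UNIV. \<Sum>k\<in>UNIV. w j k * h j k)"
    by (simp add: sum_distrib_left ac_simps)
  finally show ?thesis .
qed

(* Writing t1 = p + q r and t2 = p / r + q with p, q the times assigned to the two
  machines by X and r the ratios t1 / t2, both loads of the threshold rule become linear
  in p, q; the pair weights then distribute them over two-task instances. *)
lemma makespan_alg_alloc_le_two_task_costs:
  fixes t1 t2 :: "real^'n::finite"
  assumes pos: "\<forall>i. 0 < t1 $ i" "\<forall>i. 0 < t2 $ i" and w: "\<And>j k. 0 \<le> w j k"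
    and wp: "\<And>j. sum (assigned X t1) UNIV * (\<Sum>k\<in>UNIV. w j k) = assigned X t1 j"
    and wq: "\<And>k. sum (assigned (\<lambda>i. \<not> X i) t2) UNIV * (\<Sum>j\<in>UNIV. w j k) = assigned (\<lambda>i. \<not> X i) t2 k"
  shows "makespan (alg_alloc t1 t2 z) t1 t2 \<le> makespan X t1 t2 *
    (\<Sum>j\<in>UNIV. \<Sum>k\<in>UNIV. w j k * two_task_cost (t1$j / t2$j) (t1$k / t2$k) (z$j) (z$k))"
proof -
  define p q where "p = assigned X t1" and "q = assigned (\<lambda>i. \<not> X i) t2"
  define r where "r i = t1$i / t2$i" for i
  define m where "m = makespan X t1 t2"
  let ?Z = "alg_alloc t1 t2 z"
  have r0: "0 < r i" for i
    using pos by (simp add: r_def)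
  have p0: "0 \<le> p i" and q0: "0 \<le> q i" for i
    using pos by (auto simp: p_def q_def assigned_def less_imp_le)
  have "0 \<le> sum p UNIV"
    using p0 by (simp add: sum_nonneg)
  then have m: "0 \<le> m" "sum p UNIV \<le> m" "sum q UNIV \<le> m"
    by (auto simp: m_def p_def q_def makespan_eq_sum_assigned)
  have load1: "assigned ?Z t1 i =
      p i * (if r i < z$i then 1 else 0) + q i * (if r i < z$i then r i else 0)" for i
    using pos by (auto simp: assigned_def alg_alloc_def p_def q_def r_def less_imp_neq[symmetric])
  have load2: "assigned (\<lambda>i. \<not> ?Z i) t2 i =
      p i * (if r i < z$i then 0 else 1 / r i) + q i * (if r i < z$i then 0 else 1)" for i
    using pos by (auto simp: assigned_def alg_alloc_def p_def q_def r_def less_imp_neq[symmetric])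
  have "max (\<Sum>i\<in>UNIV. assigned ?Z t1 i) (\<Sum>i\<in>UNIV. assigned (\<lambda>i. \<not> ?Z i) t2 i) \<le>
      m * (\<Sum>j\<in>UNIV. \<Sum>k\<in>UNIV. w j k * two_task_cost (r j) (r k) (z$j) (z$k))"
    unfolding load1 load2 using wp wq r0 w m
    by (intro max.boundedI sum_le_pair_weighted[where p = p and q = q])
      (auto simp: p_def q_def two_task_cost_def less_imp_le)
  then show ?thesis
    by (simp add: makespan_eq_sum_assigned[of ?Z] m_def r_def)
qed

lemma alg_makespan_le_weighted_phi_on:
  fixes P :: "(real^'n::finite) measure"
  assumes "prob_space P" "sets P = sets borel"
    and pos: "\<forall>i. 0 < t1 $ i" "\<forall>i. 0 < t2 $ i" and w: "\<And>j k. 0 \<le> w j k"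
    and wp: "\<And>j. sum (assigned X t1) UNIV * (\<Sum>k\<in>UNIV. w j k) = assigned X t1 j"
    and wq: "\<And>k. sum (assigned (\<lambda>i. \<not> X i) t2) UNIV * (\<Sum>j\<in>UNIV. w j k) = assigned (\<lambda>i. \<not> X i) t2 k"
  shows "alg_makespan P t1 t2 \<le>
    makespan X t1 t2 * (\<Sum>j\<in>UNIV. \<Sum>k\<in>UNIV. w j k * phi_on P j k (t1$j / t2$j) (t1$k / t2$k))"
proof -
  define r where "r i = t1$i / t2$i" for i
  have r0: "0 < r i" for i
    using pos by (simp add: r_def)
  define g where "g j k z = two_task_cost (r j) (r k) (z$j) (z$k)" for j k and z :: "real^'n"
  have int: "integrable P (g j k)" for j k
    unfolding g_def by (rule integrable_two_task_cost[OF assms(1,2) r0 r0])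
  have "alg_makespan P t1 t2 \<le> (\<integral>z. makespan X t1 t2 * (\<Sum>j\<in>UNIV. \<Sum>k\<in>UNIV. w j k * g j k z) \<partial>P)"
    unfolding alg_makespan_def
  proof (rule integral_mono[OF integrable_makespan_alg_alloc[OF assms(1,2)]])
    show "integrable P (\<lambda>z. makespan X t1 t2 * (\<Sum>j\<in>UNIV. \<Sum>k\<in>UNIV. w j k * g j k z))"
      using int by simp
  qed (use makespan_alg_alloc_le_two_task_costs[OF pos w wp wq] in \<open>simp add: g_def r_def\<close>)
  also have "\<dots> = makespan X t1 t2 * (\<Sum>j\<in>UNIV. \<Sum>k\<in>UNIV. w j k * (\<integral>z. g j k z \<partial>P))"
    using int by (simp add: Bochner_Integration.integral_sum)
  also have "\<dots> = makespan X t1 t2 * (\<Sum>j\<in>UNIV. \<Sum>k\<in>UNIV. w j k * phi_on P j k (r j) (r k))"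
    by (simp add: g_def integral_two_task_cost[OF assms(1,2) r0 r0])
  finally show ?thesis
    by (simp add: r_def)
qed

lemma alg_makespan_le_phi_on:
  fixes P :: "(real^'n::finite) measure"
  assumes "prob_space P" "sets P = sets borel" "a \<noteq> (b::'n)"
    and pos: "\<forall>i. 0 < t1 $ i" "\<forall>i. 0 < t2 $ i"
  obtains j k where "j \<noteq> k"
    "alg_makespan P t1 t2 \<le> makespan X t1 t2 * phi_on P j k (t1$j / t2$j) (t1$k / t2$k)"
proof -
  let ?phi = "\<lambda>jk. phi_on P (fst jk) (snd jk) (t1 $ fst jk / t2 $ fst jk) (t1 $ snd jk / t2 $ snd jk)"
  have "0 < assigned X t1 a + assigned (\<lambda>i. \<not> X i) t2 a"
    using pos by (simp add: assigned_def)
  also have "\<dots> \<le> sum (assigned X t1) UNIV + sum (assigned (\<lambda>i. \<not> X i) t2) UNIV"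
    using pos by (intro add_mono member_le_sum) (auto simp: assigned_def less_imp_le)
  finally have load_pos: "0 < sum (assigned X t1) UNIV + sum (assigned (\<lambda>i. \<not> X i) t2) UNIV" .
  obtain w where w: "\<And>j k. 0 \<le> w j k" "\<And>j k. w j k \<noteq> 0 \<Longrightarrow> j \<noteq> k"
    "(\<Sum>j\<in>UNIV. \<Sum>k\<in>UNIV. w j k) = 1"
    "\<And>j. sum (assigned X t1) UNIV * (\<Sum>k\<in>UNIV. w j k) = assigned X t1 j"
    "\<And>k. sum (assigned (\<lambda>i. \<not> X i) t2) UNIV * (\<Sum>j\<in>UNIV. w j k) = assigned (\<lambda>i. \<not> X i) t2 k"
    by (rule exists_pair_weights[OF assms(3) _ _ _ load_pos]) (use pos in \<open>auto simp: assigned_def less_imp_le\<close>)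
  have alg: "alg_makespan P t1 t2 \<le> makespan X t1 t2 * (\<Sum>jk\<in>UNIV. w (fst jk) (snd jk) * ?phi jk)"
    using alg_makespan_le_weighted_phi_on[OF assms(1,2) pos w(1,4,5)]
    by (simp add: sum.cartesian_product split_def)
  have wsum: "(\<Sum>jk\<in>UNIV. w (fst jk) (snd jk)) = 1"
    using w(3) by (simp add: sum.cartesian_product split_def)
  obtain jk where jk: "w (fst jk) (snd jk) \<noteq> 0"
    "(\<Sum>jk\<in>UNIV. w (fst jk) (snd jk) * ?phi jk) \<le> ?phi jk"
    by (rule exists_ge_convex_combination[of UNIV "\<lambda>jk. w (fst jk) (snd jk)" ?phi, OF _ _ wsum])
      (use w(1) in auto)
  have "alg_makespan P t1 t2 \<le> makespan X t1 t2 * ?phi jk"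
    using alg jk(2) makespan_pos[OF pos, of X] by (meson less_imp_le mult_left_mono order_trans)
  then show ?thesis
    using w(2)[OF jk(1)] by (intro that) auto
qed

lemma alg_ratio_le_phi_on:
  fixes P :: "(real^'n::finite) measure"
  assumes "prob_space P" "sets P = sets borel" "a \<noteq> (b::'n)"
    and pos: "\<forall>i. 0 < t1 $ i" "\<forall>i. 0 < t2 $ i"
  obtains j k where "j \<noteq> k"
    "alg_makespan P t1 t2 / opt_makespan t1 t2 \<le> phi_on P j k (t1$j / t2$j) (t1$k / t2$k)"
proof -
  obtain X where X: "opt_makespan t1 t2 = makespan X t1 t2"
    by (rule opt_makespan_attained)
  obtain j k where "j \<noteq> k"
    "alg_makespan P t1 t2 \<le> opt_makespan t1 t2 * phi_on P j k (t1$j / t2$j) (t1$k / t2$k)"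
    unfolding X by (rule alg_makespan_le_phi_on[OF assms])
  with opt_makespan_pos[OF pos] show ?thesis
    by (intro that[of j k]) (auto simp: divide_le_eq mult.commute)
qed

subsection \<open>Permutation-invariant measures\<close>

definition permute_coords :: "('n \<Rightarrow> 'n) \<Rightarrow> real^'n \<Rightarrow> real^'n" where
  "permute_coords p z = (\<chi> i. z $ p i)"

lemma permute_coords_comp: "permute_coords s (permute_coords p z) = permute_coords (p \<circ> s) z"
  by (simp add: permute_coords_def vec_eq_iff)

lemma permute_coords_nth[simp]: "permute_coords p z $ i = z $ p i"
  by (simp add: permute_coords_def)

lemma borel_measurable_permute_coords[measurable]: "permute_coords p \<in> borel_measurable borel"
proof -
  have "continuous_on UNIV (permute_coords p)"
    unfolding permute_coords_def
    by (intro continuous_on_vec_lambda continuous_on_component continuous_on_id)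
  then show ?thesis
    by (rule borel_measurable_continuous_onI)
qed

lemma exists_permutes_pair:
  assumes "a \<noteq> b" "j \<noteq> k"
  obtains p where "p permutes (UNIV::'n set)" "p a = j" "p b = k"
proof -
  define s where "s = Transposition.transpose a j"
  define p where "p = Transposition.transpose (s b) k \<circ> s"
  have "p permutes UNIV"
    unfolding p_def s_def by (intro permutes_compose permutes_swap_id) auto
  moreover have "p a = j" "p b = k"
    unfolding p_def s_def using assms by (auto simp: Transposition.transpose_def)
  ultimately show ?thesis
    using that by blast
qed

lemma measure_vimage_permute_coords:
  assumes "P \<in> Cn" "p permutes UNIV" "S \<in> sets borel"
  shows "measure P (permute_coords p -` S) = measure P S"
proof -
  have sP: "sets P = sets borel" and inv: "distr P borel (permute_coords p) = P"
    using assms(1,2) unfolding Cn_def Pn_def permute_coords_def[abs_def] by auto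
  have "measure P S = measure (distr P borel (permute_coords p)) S"
    using inv by simp
  also have "\<dots> = measure P (permute_coords p -` S \<inter> space P)"
    by (rule measure_distr) (use assms(3) sP in auto)
  finally show ?thesis
    using sets_eq_imp_space_eq[OF sP] by simp
qed

lemma idx1_neq_idx2:
  assumes "CARD('n::finite) \<ge> 2"
  shows "idx1 \<noteq> (idx2::'n)"
proof -
  have "\<exists>j::'n. j \<noteq> idx1"
  proof (rule ccontr)
    assume "\<not> ?thesis"
    then have "(UNIV::'n set) = {idx1}" by auto
    then have "CARD('n) = card {idx1::'n}" by (rule arg_cong)
    with assms show False by simp
  qed
  then show ?thesis unfolding idx2_def by (metis (mono_tags) someI_ex)
qed

lemma phi_on_eq_phi:
  fixes P :: "(real^'n::finite) measure"
  assumes "P \<in> Cn" "idx1 \<noteq> (idx2::'n)" "j \<noteq> k"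
  shows "phi_on P j k x y = phi P x y"
proof -
  obtain p where p: "p permutes (UNIV::'n set)" "p idx1 = j" "p idx2 = k"
    using exists_permutes_pair[OF assms(2,3)] .
  obtain p' where p': "p' permutes (UNIV::'n set)" "p' idx1 = k"
    using exists_permutes_pair[OF assms(2) assms(3)[symmetric]] by metis
  have "measure P {z. z$j \<le> x} = Fm P x" "measure P {z. z$k \<le> y} = Fm P y"
    "measure P {z. z$j \<le> x \<and> z$k \<le> y} = Hm P x y"
    using measure_vimage_permute_coords[OF assms(1) p(1), of "{z. z$idx1 \<le> x}"]
      measure_vimage_permute_coords[OF assms(1) p'(1), of "{z. z$idx1 \<le> y}"]
      measure_vimage_permute_coords[OF assms(1) p(1), of "{z. z$idx1 \<le> x \<and> z$idx2 \<le> y}"]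
    by (simp_all add: Fm_def Hm_def p p')
  then show ?thesis
    unfolding phi_on_def phi_def by simp
qed

lemma worst_ratio_eq_SUP_phi:
  fixes Q :: "(real^'n::finite) measure"
  assumes "Q \<in> Cn" "idx1 \<noteq> (idx2::'n)"
  shows "worst_ratio Q = (SUP p\<in>{0<..} \<times> {0<..}. ereal (phi Q (fst p) (snd p)))"
proof (rule antisym)
  have prob: "prob_space Q" and sQ: "sets Q = sets borel"
    using assms(1) unfolding Cn_def Pn_def by auto
  show "worst_ratio Q \<le> (SUP p\<in>{0<..} \<times> {0<..}. ereal (phi Q (fst p) (snd p)))"
    unfolding worst_ratio_def
  proof (rule SUP_least, clarify)
    fix t1 t2 :: "real^'n"
    assume "(t1, t2) \<in> pos_inst"
    then have pos: "\<forall>i. 0 < t1 $ i" "\<forall>i. 0 < t2 $ i"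
      by (auto simp: pos_inst_def)
    obtain j k where "j \<noteq> k"
      "alg_makespan Q t1 t2 / opt_makespan t1 t2 \<le> phi_on Q j k (t1$j / t2$j) (t1$k / t2$k)"
      by (rule alg_ratio_le_phi_on[OF prob sQ assms(2) pos])
    then show "ereal (alg_makespan Q (fst (t1, t2)) (snd (t1, t2)) / opt_makespan (fst (t1, t2)) (snd (t1, t2)))
        \<le> (SUP p\<in>{0<..} \<times> {0<..}. ereal (phi Q (fst p) (snd p)))"
      using pos phi_on_eq_phi[OF assms]
      by (intro SUP_upper2[where i = "(t1$j / t2$j, t1$k / t2$k)"]) auto
  qed
  show "(SUP p\<in>{0<..} \<times> {0<..}. ereal (phi Q (fst p) (snd p))) \<le> worst_ratio Q"
    using phi_on_le_worst_ratio[OF prob sQ assms(2)] phi_on_eq_phi[OF assms assms(2)]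
    by (intro SUP_least) auto
qed

subsection \<open>Symmetrization\<close>

lemma finite_permutations_UNIV: "finite {p. p permutes (UNIV::'n::finite set)}"
  by (rule finite_permutations) simp

lemma ex_permutes_UNIV: "\<exists>p. p permutes (UNIV::'n set)"
  using permutes_id by blast

lemma card_permutations_UNIV_pos: "0 < card {p. p permutes (UNIV::'n::finite set)}"
  using finite_permutations_UNIV ex_permutes_UNIV by (simp add: card_gt_0_iff)

definition symmetrization :: "(real^'n::finite) measure \<Rightarrow> (real^'n) measure" where
  "symmetrization M =
     measure_pmf (pmf_of_set {p. p permutes UNIV}) \<bind> (\<lambda>p. distr M borel (permute_coords p))"

lemma
  fixes M :: "(real^'n::finite) measure"
  assumes "prob_space M" "sets M = sets borel"
  shows sets_symmetrization: "sets (symmetrization M) = sets borel"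
    and prob_space_symmetrization: "prob_space (symmetrization M)"
    and emeasure_symmetrization: "A \<in> sets borel \<Longrightarrow> emeasure (symmetrization M) A =
      (\<Sum>p | p permutes UNIV. emeasure M (permute_coords p -` A)) / card {p. p permutes (UNIV::'n set)}"
proof -
  interpret prob_space M by fact
  let ?Perms = "{p. p permutes (UNIV::'n set)}" and ?K = "\<lambda>p. distr M borel (permute_coords p)"
  have Perms: "finite ?Perms" "?Perms \<noteq> {}"
    using finite_permutations_UNIV ex_permutes_UNIV by auto
  have K: "prob_space (?K p)" for p
    by (rule prob_space_distr) (simp add: measurable_cong_sets[OF assms(2) refl])
  then have K_meas: "?K \<in> measure_pmf (pmf_of_set ?Perms) \<rightarrow>\<^sub>M subprob_algebra borel"
    by (auto simp: space_subprob_algebra prob_space_imp_subprob_space)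
  show "sets (symmetrization M) = sets borel"
    unfolding symmetrization_def by (rule sets_bind_measurable[OF K_meas]) simp
  show "prob_space (symmetrization M)"
    unfolding symmetrization_def
    by (rule measure_pmf.prob_space_bind) (use K K_meas in auto)
  assume A: "A \<in> sets borel"
  have "emeasure (symmetrization M) A = (\<integral>\<^sup>+p. emeasure (?K p) A \<partial>measure_pmf (pmf_of_set ?Perms))"
    unfolding symmetrization_def by (rule emeasure_bind[OF _ K_meas A]) simp
  also have "\<dots> = (\<Sum>p\<in>?Perms. emeasure (?K p) A) / card ?Perms"
    by (rule nn_integral_pmf_of_set[OF Perms(2,1)])
  also have "(\<Sum>p\<in>?Perms. emeasure (?K p) A) = (\<Sum>p\<in>?Perms. emeasure M (permute_coords p -` A))"
    using sets_eq_imp_space_eq[OF assms(2)] A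
    by (intro sum.cong refl, subst emeasure_distr) (auto simp: measurable_cong_sets[OF assms(2) refl])
  finally show "emeasure (symmetrization M) A =
      (\<Sum>p | p permutes UNIV. emeasure M (permute_coords p -` A)) / card ?Perms" .
qed

lemma measure_symmetrization:
  fixes M :: "(real^'n::finite) measure"
  assumes "prob_space M" "sets M = sets borel" "A \<in> sets borel"
  shows "measure (symmetrization M) A =
    (\<Sum>p | p permutes UNIV. measure M (permute_coords p -` A)) / card {p. p permutes (UNIV::'n set)}"
proof -
  interpret prob_space M by fact
  let ?Perms = "{p. p permutes (UNIV::'n set)}"
  have N: "0 < card ?Perms"
    by (rule card_permutations_UNIV_pos)
  have "emeasure (symmetrization M) A = ennreal ((\<Sum>p\<in>?Perms. measure M (permute_coords p -` A)) / card ?Perms)"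
    using N unfolding emeasure_symmetrization[OF assms]
    by (simp add: emeasure_eq_measure sum_ennreal divide_ennreal sum_nonneg
        ennreal_of_nat_eq_real_of_nat)
  then show ?thesis
    unfolding measure_def by (simp add: sum_nonneg)
qed

lemma distr_symmetrization:
  fixes M :: "(real^'n::finite) measure"
  assumes "prob_space M" "sets M = sets borel" "s permutes UNIV"
  shows "distr (symmetrization M) borel (permute_coords s) = symmetrization M"
proof (rule measure_eqI)
  show "sets (distr (symmetrization M) borel (permute_coords s)) = sets (symmetrization M)"
    using sets_symmetrization[OF assms(1,2)] by simp
  fix A assume "A \<in> sets (distr (symmetrization M) borel (permute_coords s))"
  then have A: "A \<in> sets borel" by simp
  have vimage: "permute_coords p -` (permute_coords s -` A) = permute_coords (p \<circ> s) -` A" for p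
    by (auto simp: permute_coords_comp)
  have sA: "permute_coords s -` A \<in> sets borel"
    using measurable_sets[OF borel_measurable_permute_coords A] by simp
  have "emeasure (distr (symmetrization M) borel (permute_coords s)) A =
      emeasure (symmetrization M) (permute_coords s -` A)"
    using sets_eq_imp_space_eq[OF sets_symmetrization[OF assms(1,2)]] A
    by (subst emeasure_distr) (auto simp: measurable_cong_sets[OF sets_symmetrization[OF assms(1,2)] refl])
  also have "\<dots> = (\<Sum>p | p permutes UNIV. emeasure M (permute_coords (p \<circ> s) -` A)) /
      card {p. p permutes (UNIV::'n set)}"
    by (simp add: emeasure_symmetrization[OF assms(1,2) sA] vimage)
  also have "\<dots> = (\<Sum>p | p permutes UNIV. emeasure M (permute_coords p -` A)) /
      card {p. p permutes (UNIV::'n set)}"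
    by (simp only: sum_permutations_compose_right[OF assms(3),
          of "\<lambda>p. emeasure M (permute_coords p -` A)", symmetric])
  also have "\<dots> = emeasure (symmetrization M) A"
    using A by (simp add: emeasure_symmetrization[OF assms(1,2)])
  finally show "emeasure (distr (symmetrization M) borel (permute_coords s)) A = emeasure (symmetrization M) A" .
qed

lemma not_in_msupp_iff:
  assumes "sets M = sets borel"
  shows "x \<notin> msupp M \<longleftrightarrow> (\<forall>\<^sub>F e in at_right 0. emeasure M (ball x e) = 0)"
proof
  assume "x \<notin> msupp M"
  then obtain e0 where "0 < e0" "emeasure M (ball x e0) = 0"
    by (auto simp: msupp_def not_less)
  then show "\<forall>\<^sub>F e in at_right 0. emeasure M (ball x e) = 0"
    unfolding eventually_at_right_field
    by (intro exI[of _ e0]) (auto intro!: emeasure_eq_0[of "ball x e0"] simp: assms)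
next
  assume "\<forall>\<^sub>F e in at_right 0. emeasure M (ball x e) = 0"
  then obtain b where "0 < b" "\<And>e. 0 < e \<Longrightarrow> e < b \<Longrightarrow> emeasure M (ball x e) = 0"
    unfolding eventually_at_right_field by auto
  then show "x \<notin> msupp M"
    unfolding msupp_def by (auto intro!: exI[of _ "b/2"])
qed

lemma dist_permute_coords:
  assumes "p permutes (UNIV::'n::finite set)"
  shows "dist (permute_coords p x) (permute_coords p y) = dist x y"
proof -
  have "(\<Sum>i\<in>UNIV. (norm ((x - y) $ p i))\<^sup>2) = (\<Sum>i\<in>UNIV. (norm ((x - y) $ i))\<^sup>2)"
    using sum.permute[OF assms, of "\<lambda>i. (norm ((x - y) $ i))\<^sup>2"] by (simp add: comp_def)
  then show ?thesis
    unfolding dist_norm norm_vec_def L2_set_def permute_coords_def by simp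
qed

lemma vimage_permute_coords_ball:
  assumes "p permutes (UNIV::'n::finite set)"
  shows "permute_coords p -` ball x e = ball (permute_coords (inv p) x) e"
proof -
  have "x = permute_coords p (permute_coords (inv p) x)"
    by (simp add: permute_coords_comp permutes_inv_o(2)[OF assms]) (simp add: permute_coords_def)
  then have "dist x (permute_coords p z) = dist (permute_coords (inv p) x) z" for z
    using dist_permute_coords[OF assms] by metis
  then show ?thesis by auto
qed

lemma permute_coords_in_orthant_iff:
  assumes "p permutes (UNIV::'n::finite set)"
  shows "permute_coords p x \<in> orthant \<longleftrightarrow> x \<in> orthant"
  using assms unfolding orthant_def permute_coords_def
  by (auto simp: permutes_def) (metis permutes_inverses(1)[OF assms])

lemma msupp_symmetrization:
  fixes M :: "(real^'n::finite) measure"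
  assumes "prob_space M" "sets M = sets borel" "msupp M \<subseteq> orthant"
  shows "msupp (symmetrization M) \<subseteq> orthant"
proof
  fix x assume x: "x \<in> msupp (symmetrization M)"
  show "x \<in> orthant"
  proof (rule ccontr)
    assume "x \<notin> orthant"
    then have "permute_coords (inv p) x \<notin> msupp M" if "p permutes UNIV" for p
      using assms(3) permute_coords_in_orthant_iff[OF permutes_inv[OF that]] by auto
    then have "\<forall>\<^sub>F e in at_right 0. \<forall>p\<in>{p. p permutes UNIV}. emeasure M (ball (permute_coords (inv p) x) e) = 0"
      using finite_permutations_UNIV
      by (intro eventually_ball_finite) (auto simp: not_in_msupp_iff[OF assms(2)])
    then have "\<forall>\<^sub>F e in at_right 0. emeasure (symmetrization M) (ball x e) = 0"
      by eventually_elim (simp add: emeasure_symmetrization[OF assms(1,2)] vimage_permute_coords_ball)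
    then show False
      using x not_in_msupp_iff[OF sets_symmetrization[OF assms(1,2)]] by blast
  qed
qed

lemma symmetrization_in_Cn:
  assumes "P \<in> Pn"
  shows "symmetrization P \<in> Cn"
proof -
  have P: "prob_space P" "sets P = sets borel" "msupp P \<subseteq> orthant"
    using assms unfolding Pn_def by auto
  show ?thesis
    using distr_symmetrization[OF P(1,2)] msupp_symmetrization[OF P]
      prob_space_symmetrization[OF P(1,2)] sets_symmetrization[OF P(1,2)]
    unfolding Cn_def Pn_def permute_coords_def[abs_def] by auto
qed

lemma phi_on_symmetrization:
  fixes M :: "(real^'n::finite) measure"
  assumes "prob_space M" "sets M = sets borel"
  shows "phi_on (symmetrization M) j k x y =
    (\<Sum>p | p permutes UNIV. phi_on M (p j) (p k) x y) / card {p. p permutes (UNIV::'n set)}"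
proof -
  let ?Perms = "{p. p permutes (UNIV::'n set)}"
  have N: "0 < card ?Perms"
    by (rule card_permutations_UNIV_pos)
  show ?thesis
    using N unfolding phi_on_def
    by (simp add: measure_symmetrization[OF assms] ex_permutes_UNIV sum_subtractf sum.distrib sum_distrib_left
        add_divide_distrib diff_divide_distrib)
qed

lemma worst_ratio_symmetrization_le:
  fixes P :: "(real^'n::finite) measure"
  assumes "P \<in> Pn" "idx1 \<noteq> (idx2::'n)"
  shows "worst_ratio (symmetrization P) \<le> worst_ratio P"
proof -
  have P: "prob_space P" "sets P = sets borel"
    using assms(1) unfolding Pn_def by auto
  let ?Perms = "{p. p permutes (UNIV::'n set)}"
  have Perms: "finite ?Perms" "0 < card ?Perms"
    by (rule finite_permutations_UNIV card_permutations_UNIV_pos)+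
  have "ereal (phi (symmetrization P) x y) \<le> worst_ratio P" if "0 < x" "0 < y" for x y
  proof -
    have wsum: "(\<Sum>p\<in>?Perms. 1 / card ?Perms) = 1"
      using Perms by (simp add: ex_permutes_UNIV)
    obtain p where p: "p permutes UNIV" "(\<Sum>q\<in>?Perms. 1 / card ?Perms * phi_on P (q idx1) (q idx2) x y)
        \<le> phi_on P (p idx1) (p idx2) x y"
      by (rule exists_ge_convex_combination[of _ "\<lambda>_. 1 / card ?Perms"
            "\<lambda>q. phi_on P (q idx1) (q idx2) x y", OF Perms(1) _ wsum]) auto
    have "phi (symmetrization P) x y = (\<Sum>q\<in>?Perms. phi_on P (q idx1) (q idx2) x y) / card ?Perms"
      using phi_on_eq_phi[OF symmetrization_in_Cn[OF assms(1)] assms(2) assms(2)]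
        phi_on_symmetrization[OF P] by metis
    also have "\<dots> \<le> phi_on P (p idx1) (p idx2) x y"
      using p(2) by (simp add: sum_divide_distrib)
    also have "ereal \<dots> \<le> worst_ratio P"
      using p(1) assms(2) that by (intro phi_on_le_worst_ratio[OF P]) (auto simp: permutes_inj inj_eq)
    finally show ?thesis by simp
  qed
  then show ?thesis
    unfolding worst_ratio_eq_SUP_phi[OF symmetrization_in_Cn[OF assms(1)] assms(2)]
    by (intro SUP_least) auto
qed

lemma Rn_eq_INF_Cn_worst_ratio:
  assumes "idx1 \<noteq> (idx2::'n::finite)"
  shows "Rn TYPE('n) = (INF M \<in> (Cn :: (real^'n) measure set). worst_ratio M)"
  unfolding Rn_def
proof (rule antisym)
  show "(INF M\<in>(Pn :: (real^'n) measure set). worst_ratio M) \<le>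
      (INF M\<in>(Cn :: (real^'n) measure set). worst_ratio M)"
    by (rule INF_superset_mono) (auto simp: Cn_def)
  show "(INF M\<in>(Cn :: (real^'n) measure set). worst_ratio M) \<le>
      (INF M\<in>(Pn :: (real^'n) measure set). worst_ratio M)"
    by (rule INF_mono) (use symmetrization_in_Cn worst_ratio_symmetrization_le[OF _ assms] in blast)
qed

theorem corollary3:
  assumes "CARD('n::finite) \<ge> 2"
  shows "Rn TYPE('n) =
    (INF M \<in> (Cn :: (real^'n) measure set).
       SUP p \<in> {0<..} \<times> {0<..}. ereal (phi M (fst p) (snd p)))"
proof -
  have idx: "idx1 \<noteq> (idx2::'n)"
    using assms by (rule idx1_neq_idx2)
  then have "Rn TYPE('n) = (INF M \<in> (Cn :: (real^'n) measure set). worst_ratio M)"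
    by (rule Rn_eq_INF_Cn_worst_ratio)
  also have "\<dots> = (INF M \<in> (Cn :: (real^'n) measure set).
      SUP p \<in> {0<..} \<times> {0<..}. ereal (phi M (fst p) (snd p)))"
    by (rule INF_cong[OF refl worst_ratio_eq_SUP_phi[OF _ idx]])
  finally show ?thesis .
qed

end
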